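(* Let $q$ be a prime power, $e\ge 2$, $\ell=q^{e-1}+\cdots+q+1$, and let $h$ be a positive integer and $r$ an integer. Then $r(q^h-1)-q+1\equiv 0\pmod{q^e-1}$ if and only if $\gcd(h,e)=1$ and $r\equiv s\ell+\sum_{i=0}^{k-1}q^{hi}\pmod{q^e-1}$ for some integer $s$, where $k$ is a positive integer whose reduction modulo $e$ is the inverse of $h$ modulo $e$. *)

theory Defs
  imports "HOL-Number_Theory.Number_Theory"
begin

end

theory Submission
  imports Defs
begin

text \<open>Write \<open>T = (q^h - 1)/(q - 1)\<close> and \<open>S = \<Sum>i<k. q^(h i)\<close>. Since \<open>q^e \<equiv> 1\<close> modulo
  \<open>q^e - 1\<close>, exponents of \<open>q\<close> only matter modulo \<open>e\<close>, so \<open>kh \<equiv> 1 (mod e)\<close> gives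
  \<open>(q^h - 1) S = q^(kh) - 1 \<equiv> q - 1\<close>; dividing by \<open>q - 1\<close>, \<open>S\<close> is an inverse of \<open>T\<close> modulo \<open>\<ell>\<close>.
  Dividing the congruence of the theorem by \<open>q - 1\<close> turns it into \<open>r T \<equiv> 1 (mod \<ell>)\<close>,
  i.e. \<open>r \<equiv> S (mod \<ell>)\<close>. For coprimality, with \<open>d = gcd h e\<close> the number \<open>q^d - 1\<close> divides
  \<open>q^h - 1\<close> and \<open>q^e - 1\<close>, hence \<open>q - 1\<close>, which forces \<open>d = 1\<close>.\<close>

lemma cong_mult_cancel_modulus:
  fixes a b c n :: int
  assumes "c \<noteq> 0"
  shows "[c * a = c * b] (mod c * n) \<longleftrightarrow> [a = b] (mod n)"
  using assms by (simp add: cong_iff_dvd_diff flip: right_diff_distrib)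

lemma cong_mult_eq_one_iff_cong_inverse:
  fixes a b n x :: "'a :: unique_euclidean_ring"
  assumes "[a * b = 1] (mod n)"
  shows "[x * a = 1] (mod n) \<longleftrightarrow> [x = b] (mod n)"
proof
  assume "[x * a = 1] (mod n)"
  have "[x * 1 = x * (a * b)] (mod n)"
    using assms by (intro cong_mult cong_refl) (rule cong_sym)
  also have "x * (a * b) = (x * a) * b"
    by (simp add: mult.assoc)
  also have "[\<dots> = 1 * b] (mod n)"
    using \<open>[x * a = 1] (mod n)\<close> by (intro cong_mult cong_refl)
  finally show "[x = b] (mod n)" by simp
next
  assume "[x = b] (mod n)"
  then have "[x * a = a * b] (mod n)"
    by (metis cong_scalar_right mult.commute)
  then show "[x * a = 1] (mod n)"
    using assms by (rule cong_trans)
qed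

lemma ex_cong_multiple_add_iff:
  fixes r a l n :: int
  assumes "l dvd n"
  shows "(\<exists>s. [r = s * l + a] (mod n)) \<longleftrightarrow> [r = a] (mod l)"
proof
  assume "\<exists>s. [r = s * l + a] (mod n)"
  then obtain s where "[r = s * l + a] (mod l)"
    using assms cong_dvd_modulus by blast
  moreover have "[s * l + a = a] (mod l)"
    by (simp add: cong_iff_dvd_diff)
  ultimately show "[r = a] (mod l)"
    by (rule cong_trans)
next
  assume "[r = a] (mod l)"
  then have "[a = r] (mod l)"
    by (rule cong_sym)
  then obtain s where "r = a + l * s"
    unfolding cong_iff_lin ..
  then have "[r = s * l + a] (mod n)"
    by (simp add: mult.commute add.commute)
  then show "\<exists>s. [r = s * l + a] (mod n)" ..
qed

lemma ex_pos_mult_inverse_mod: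
  fixes h e :: nat
  assumes "coprime h e"
  shows "\<exists>k>0. [k * h = 1] (mod e)"
proof -
  obtain k where "[h * k = 1] (mod e)"
    using cong_solve_coprime_nat assms by auto
  then have k: "[k * h = 1] (mod e)"
    by (simp add: mult.commute)
  have "[(k + e) * h = k * h] (mod e)"
    unfolding add_mult_distrib cong_def by simp
  then have inverse: "[(k + e) * h = 1] (mod e)"
    using k by (rule cong_trans)
  have "k + e > 0"
  proof (rule ccontr)
    assume "\<not> k + e > 0"
    then have "k = 0" "e = 0"
      by simp_all
    then show False
      using k by simp
  qed
  with inverse show ?thesis
    by blast
qed

lemma cong_power_mod_power_minus_one:
  fixes Q :: int and a b e :: nat
  assumes "[a = b] (mod e)"
  shows "[Q ^ a = Q ^ b] (mod Q ^ e - 1)"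
proof -
  have unit: "[Q ^ e = 1] (mod Q ^ e - 1)"
    by (simp add: cong_iff_dvd_diff)
  have reduce: "[Q ^ n = Q ^ (n mod e)] (mod Q ^ e - 1)" for n
  proof -
    have "Q ^ n = Q ^ (n mod e) * (Q ^ e) ^ (n div e)"
      by (metis div_mult_mod_eq add.commute power_add power_mult mult.commute)
    also have "[\<dots> = Q ^ (n mod e) * 1 ^ (n div e)] (mod Q ^ e - 1)"
      by (intro cong_mult cong_refl cong_pow unit)
    finally show ?thesis by simp
  qed
  have "a mod e = b mod e"
    using assms by (simp add: cong_def)
  then show ?thesis
    using reduce[of a] reduce[of b] by (metis cong_sym cong_trans)
qed

lemma power_minus_one_dvd_self_minus_one_iff:
  fixes Q :: int and d :: nat
  assumes "Q \<ge> 2"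
  shows "Q ^ d - 1 dvd Q - 1 \<longleftrightarrow> d = 1"
proof
  assume dvd: "Q ^ d - 1 dvd Q - 1"
  show "d = 1"
  proof (rule ccontr)
    assume "d \<noteq> 1"
    moreover have "d \<noteq> 0"
    proof
      assume "d = 0"
      then have "Q = 1"
        using dvd by simp
      then show False
        using assms by simp
    qed
    ultimately have "Q ^ 2 \<le> Q ^ d"
      using assms by (intro power_increasing) auto
    moreover have "Q ^ d - 1 \<le> Q - 1"
      using dvd assms by (intro zdvd_imp_le) auto
    moreover have "Q < Q ^ 2"
      using assms by (simp add: power2_eq_square)
    ultimately show False
      by linarith
  qed
qed simp

lemma coprime_exponents_if_cong:
  fixes Q r :: int and h e :: nat
  assumes "Q \<ge> 2" and "[r * (Q ^ h - 1) = Q - 1] (mod Q ^ e - 1)"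
  shows "coprime h e"
proof -
  define d where "d = gcd h e"
  have "[Q ^ h = Q ^ 0] (mod Q ^ d - 1)" "[Q ^ e = Q ^ 0] (mod Q ^ d - 1)"
    by (intro cong_power_mod_power_minus_one; simp add: cong_0_iff d_def)+
  then have "Q ^ d - 1 dvd Q ^ h - 1" "Q ^ d - 1 dvd Q ^ e - 1"
    by (simp_all add: cong_iff_dvd_diff)
  then have "[r * (Q ^ h - 1) = Q - 1] (mod Q ^ d - 1)" "[r * (Q ^ h - 1) = 0] (mod Q ^ d - 1)"
    using assms(2) cong_dvd_modulus by (auto simp: cong_0_iff)
  then have "Q ^ d - 1 dvd Q - 1"
    by (metis cong_0_iff cong_sym cong_trans)
  then have "d = 1"
    by (rule power_minus_one_dvd_self_minus_one_iff[OF assms(1), THEN iffD1])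
  then show ?thesis
    unfolding d_def coprime_iff_gcd_eq_1 .
qed

lemma cong_geometric_sum_of_inverse_exponent:
  fixes Q :: int and h e k :: nat
  assumes "[k * h = 1] (mod e)"
  shows "[(Q ^ h - 1) * (\<Sum>i<k. Q ^ (h * i)) = Q - 1] (mod Q ^ e - 1)"
proof -
  have "(Q ^ h - 1) * (\<Sum>i<k. Q ^ (h * i)) = (Q ^ h - 1) * (\<Sum>i<k. (Q ^ h) ^ i)"
    by (simp add: power_mult)
  also have "\<dots> = (Q ^ h) ^ k - 1"
    by (rule power_diff_1_eq[symmetric])
  also have "\<dots> = Q ^ (k * h) - 1"
    by (simp add: power_mult mult.commute)
  also have "[\<dots> = Q ^ 1 - 1] (mod Q ^ e - 1)"
    by (intro cong_diff cong_refl cong_power_mod_power_minus_one assms)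
  finally show ?thesis by simp
qed

lemma cong_geometric_sums_mult_eq_one:
  fixes Q :: int and h e k :: nat
  assumes "Q \<noteq> 1" and "[k * h = 1] (mod e)"
  shows "[(\<Sum>j<h. Q ^ j) * (\<Sum>i<k. Q ^ (h * i)) = 1] (mod (\<Sum>i<e. Q ^ i))"
proof -
  have "Q - 1 \<noteq> 0"
    using assms(1) by simp
  moreover have "[(Q - 1) * ((\<Sum>j<h. Q ^ j) * (\<Sum>i<k. Q ^ (h * i))) = (Q - 1) * 1]
      (mod (Q - 1) * (\<Sum>i<e. Q ^ i))"
    using cong_geometric_sum_of_inverse_exponent[OF assms(2), of Q]
    by (simp add: power_diff_1_eq mult.assoc)
  ultimately show ?thesis
    using cong_mult_cancel_modulus by blast
qed

lemma cong_times_power_minus_one_iff: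
  fixes Q r :: int and h e k :: nat
  assumes "Q \<noteq> 1" and "[k * h = 1] (mod e)"
  shows "[r * (Q ^ h - 1) = Q - 1] (mod Q ^ e - 1) \<longleftrightarrow>
    [r = (\<Sum>i<k. Q ^ (h * i))] (mod (\<Sum>i<e. Q ^ i))"
proof -
  define T where "T = (\<Sum>j<h. Q ^ j)"
  have "[r * (Q ^ h - 1) = Q - 1] (mod Q ^ e - 1) \<longleftrightarrow>
      [(Q - 1) * (r * T) = (Q - 1) * 1] (mod (Q - 1) * (\<Sum>i<e. Q ^ i))"
    unfolding power_diff_1_eq[of Q h] power_diff_1_eq[of Q e] T_def by (simp add: mult.left_commute)
  also have "\<dots> \<longleftrightarrow> [r * T = 1] (mod (\<Sum>i<e. Q ^ i))"
    using assms(1) by (intro cong_mult_cancel_modulus) simp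
  also have "\<dots> \<longleftrightarrow> [r = (\<Sum>i<k. Q ^ (h * i))] (mod (\<Sum>i<e. Q ^ i))"
    using cong_geometric_sums_mult_eq_one[OF assms] unfolding T_def by (rule cong_mult_eq_one_iff_cong_inverse)
  finally show ?thesis .
qed

theorem lemma3p3:
  fixes q e h :: nat and r :: int and p m :: nat
  assumes "prime p" and "m \<ge> 1" and "q = p ^ m"
    and "e \<ge> 2" and "h > 0"
  defines "l \<equiv> (\<Sum>i<e. int q ^ i)"
  shows "[r * (int q ^ h - 1) - int q + 1 = 0] (mod (int q ^ e - 1)) \<longleftrightarrow>
           (coprime h e \<and>
            (\<forall>k::nat. k > 0 \<and> [k * h = 1] (mod e) \<longrightarrow>
               (\<exists>s::int. [r = s * l + (\<Sum>i<k. int q ^ (h * i))] (mod (int q ^ e - 1)))))"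
proof -
  define Q where "Q = int q"
  have "q > 1"
    unfolding assms(3) using prime_gt_1_nat[OF assms(1)] assms(2) by (intro one_less_power) auto
  then have Q_ge_2: "Q \<ge> 2"
    by (simp add: Q_def)
  have l_eq: "l = (\<Sum>i<e. Q ^ i)"
    by (simp add: l_def Q_def)
  have "l dvd Q ^ e - 1"
    unfolding l_eq by (simp add: power_diff_1_eq)
  note witness_iff = ex_cong_multiple_add_iff[OF this]
  have key: "(\<exists>s. [r = s * l + (\<Sum>i<k. Q ^ (h * i))] (mod Q ^ e - 1)) \<longleftrightarrow>
      [r * (Q ^ h - 1) = Q - 1] (mod Q ^ e - 1)" if "[k * h = 1] (mod e)" for k
    using cong_times_power_minus_one_iff[of Q k h e r, folded l_eq] Q_ge_2 that witness_iff by simp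
  have "[r * (Q ^ h - 1) - Q + 1 = 0] (mod Q ^ e - 1) \<longleftrightarrow>
      [r * (Q ^ h - 1) = Q - 1] (mod Q ^ e - 1)"
    by (simp add: cong_iff_dvd_diff algebra_simps)
  then show ?thesis
    unfolding Q_def[symmetric]
  proof (rule ssubst, intro iffI conjI allI impI)
    show "coprime h e" if "[r * (Q ^ h - 1) = Q - 1] (mod Q ^ e - 1)"
      using Q_ge_2 that by (rule coprime_exponents_if_cong)
  qed (use key ex_pos_mult_inverse_mod in blast)+
qed

end
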